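(* Let $\{\mu_t\}$ be a free convolution semigroup and let $\{V_n(x,t)\}_{n\ge1}$ be a family of fluctuation polynomials for $\{\mu_t\}$, i.e. for each $n\ge1$, $\partial_xV_n(x,t)$ is a martingale polynomial for $\{\mu_t\}$ of degree $n-1$. Then for each $t\in\mathbb R_+$, $\{1\}\cup\{V_n(\cdot,t)\}_{n\ge1}$ is a basis of $\mathbb C[x]$. Let $\{V_n^\ast(t)\}_{n\ge1}\subset\mathcal M_0$ be the dual family, determined by $\langle V_n^\ast(t),1\rangle=0$ and $\langle V_n^\ast(t),V_k(\cdot,t)\rangle=\delta_{nk}$. Then for all $n\ge1$ and $s,t\ge0$, $D_{\mu_s}C_t(V_n^\ast(s))=V_n^\ast(t+s)$.
   Context: $\mathcal M$ is the space of linear functionals on $\mathbb C[x]$ with the weak-$*$ topology (convergence of every moment), $\mathcal M_1=\{\nu:\langle\nu,1\rangle=1\}$, $\mathcal M_0=\{\nu:\langle\nu,1\rangle=0\}$. For unital $\nu$: $G_\nu(z)=\sum\langle\nu,x^n\rangle z^{-(n+1)}$, $K_\nu$ its compositional inverse, $R_\nu=K_\nu-\frac1z$; $\boxplus$ on $\mathcal M_1$ is defined by $R_{\mu\boxplus\nu}=R_\mu+R_\nu$. $\mu$ is a freely infinitely divisible probability measure with all moments finite and $\{\mu_t\}$ the free convolution semigroup with $\mu_1=\mu$, $R_{\mu_t}=tR_\mu$. $C_t(\tau)=\mu_t\boxplus\tau$ and $D_\tau C_t(\nu)=\lim_{\varepsilon\to0}\frac1\varepsilon(C_t(\tau+\varepsilon\nu)-C_t(\tau))$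 (weak-$*$ limit) for $\tau\in\mathcal M_1$, $\nu\in\mathcal M_0$. Martingale polynomial: $p(x,t)$ polynomial in $x$ with $\mathcal K_{s,t}(p(\cdot,t))=p(\cdot,s)$ for $s<t$, where $\mathcal K_{s,t}$ is the linear operator on $\mathbb C[x]$ determined coefficientwise (as formal series in $z^{-1}$) by $\mathcal K_{s,t}(\mathrm{Res}_z)=\mathrm{Res}_{F_{s,t}(z)}$, $\mathrm{Res}_z(x)=\frac1{z-x}$, $F_{s,t}=K_{\mu_s}\circ G_{\mu_t}$. *)

theory Defs
  imports "HOL-Probability.Probability" "HOL-Computational_Algebra.Computational_Algebra"
begin

text \<open>Linear functionals on C[x] are represented by their moment sequences
  nu :: nat => complex, nu k = <nu, x^k>.  The pairing with a polynomial:\<close>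

type_synonym functional = "nat \<Rightarrow> complex"

definition pair :: "functional \<Rightarrow> complex poly \<Rightarrow> complex" where
  "pair nu p = (\<Sum>i\<le>degree p. coeff p i * nu i)"

text \<open>All formal series below are in the variable w = 1/z.
  G_nu(z) = sum nu n z^-(n+1) corresponds to the fps gfps nu = w * M_nu(w).\<close>

definition gfps :: "functional \<Rightarrow> complex fps" where
  "gfps nu = fps_X * Abs_fps nu"

text \<open>R-transform: R_nu = K_nu - 1/z where K_nu is the compositional inverse of G_nu.
  Composing with G_nu: R_nu(G_nu(z)) = z - 1/G_nu(z), i.e. in w:
  (R_nu oo g)(w) = 1/w - 1/(w M(w)) = (1 - 1/M(w))/w.\<close>

definition Rtr :: "functional \<Rightarrow> complex fps" where
  "Rtr nu = fps_shift 1 (1 - inverse (Abs_fps nu)) oo fps_inv (gfps nu)"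

definition fconv :: "functional \<Rightarrow> functional \<Rightarrow> functional" where
  "fconv tau nu = (THE lam. lam 0 = 1 \<and> Rtr lam = Rtr tau + Rtr nu)"

definition mom :: "real measure \<Rightarrow> functional" where
  "mom M n = complex_of_real (\<integral>x. x ^ n \<partial>M)"

text \<open>F_{s,t} = K_{mu_s} o G_{mu_t}, with K_{mu_s}(u) = 1/u + R_{mu_s}(u).
  As a Laurent series in w: F = (1/w) * (1/M_t(w)) + R_s(G_t).  We store w*F:\<close>

definition wF :: "functional \<Rightarrow> functional \<Rightarrow> complex fps" where
  "wF ms mt = inverse (Abs_fps mt) + fps_X * (Rtr ms oo gfps mt)"

text \<open>Res_{F(z)}(x) = 1/(F(z) - x) = w / (wF - w x), a series in w with
  coefficients in C[x]; the coefficient of z^-(k+1) = w^(k+1) is the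
  coefficient of w^k of (wF - w x)^-1 (whose constant term is 1).\<close>

definition resF :: "functional \<Rightarrow> functional \<Rightarrow> complex poly fps" where
  "resF ms mt = fps_right_inverse
     (Abs_fps (\<lambda>n. [:wF ms mt $ n:]) - fps_X * fps_const [:0, 1:]) 1"

definition Kop :: "functional \<Rightarrow> functional \<Rightarrow> complex poly \<Rightarrow> complex poly" where
  "Kop ms mt p = (\<Sum>i\<le>degree p. smult (coeff p i) (resF ms mt $ i))"

definition martingale_poly :: "(real \<Rightarrow> functional) \<Rightarrow> (real \<Rightarrow> complex poly) \<Rightarrow> bool" where
  "martingale_poly m p \<longleftrightarrow>
     (\<forall>s t. 0 \<le> s \<longrightarrow> s < t \<longrightarrow> Kop (m s) (m t) (p t) = p s)"

definition is_basis_family :: "(nat \<Rightarrow> complex poly) \<Rightarrow> bool" where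
  "is_basis_family B \<longleftrightarrow>
     (\<forall>q. \<exists>c N. q = (\<Sum>k\<le>N. smult (c k) (B k))) \<and>
     (\<forall>c N. (\<Sum>k\<le>N. smult (c k) (B k)) = 0 \<longrightarrow> (\<forall>k\<le>N. c k = 0))"

end

(*
  All transforms are formal power series in w = 1/z.  Perturbing mu_s in a direction nu perturbs
  its Cauchy transform linearly; differentiating coefficientwise through the compositional
  inverses and the additivity of the R-transform shows that D_{mu_s} C_t (nu) is the functional
  with generating series w^2 (P o F)', where P is an antiderivative of the Cauchy transform of nu
  and F = 1/F_{s,t}.  The coefficients of K_{s,t} are powers of the same F, so pairing this
  functional with Q equals pairing nu with any L such that L' = K_{s,t} Q'.  For the fluctuation
  polynomials this is the martingale property; hence D_{mu_s} C_t (V_n^*(s)) and V_n^*(t+s) agree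
  on 1 and the V_k(., t+s), which form a basis because V_k has degree k.
*)

theory Submission
  imports Defs
begin

unbundle no vec_syntax

lemma fps_X_power_mult_shift:
  fixes a :: "'a::comm_semiring_1 fps"
  assumes "\<And>i. i < n \<Longrightarrow> a $ i = 0"
  shows "fps_X ^ n * fps_shift n a = a"
  using assms by (intro fps_ext) (auto simp: fps_X_power_mult_nth)

lemma fps_X_power_mult_shift_compose:
  fixes a b :: "'a::idom fps"
  assumes "\<And>i. i < n \<Longrightarrow> a $ i = 0" and "b $ 0 = 0"
  shows "a oo b = b ^ n * (fps_shift n a oo b)"
proof -
  have "a oo b = (fps_X ^ n * fps_shift n a) oo b"
    using fps_X_power_mult_shift[OF assms(1)] by simp
  then show ?thesis
    using assms(2) by (simp add: fps_compose_mult_distrib fps_compose_power[symmetric])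
qed

lemma fps_inv_nth_0 [simp]: "fps_inv a $ 0 = 0"
  by (simp add: fps_inv_def)

lemma fps_inv_nth_1: "fps_inv a $ 1 = 1 / a $ 1"
  by (simp add: fps_inv_def)

lemma fps_X_mult_shift_fps_inv: "fps_X * fps_shift 1 (fps_inv a) = fps_inv a"
  using fps_X_power_mult_shift[of 1 "fps_inv a"] by simp

lemma fps_compose_mult_nth:
  fixes B G E :: "'a::comm_ring_1 fps"
  assumes G0: "G $ 0 = 0"
  shows "((B oo G) * E) $ n = (\<Sum>i=0..n. B $ i * (G ^ i * E) $ n)"
proof -
  have "((B oo G) * E) $ n = (\<Sum>p=0..n. (\<Sum>i=0..p. B $ i * (G ^ i) $ p) * E $ (n - p))"
    by (simp add: fps_mult_nth fps_compose_nth)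
  also have "\<dots> = (\<Sum>p=0..n. (\<Sum>i=0..n. B $ i * (G ^ i) $ p) * E $ (n - p))"
  proof (intro sum.cong refl)
    fix p assume "p \<in> {0..n}"
    then have "(\<Sum>i=0..p. B $ i * (G ^ i) $ p) = (\<Sum>i=0..n. B $ i * (G ^ i) $ p)"
      by (intro sum.mono_neutral_left) (auto simp: startsby_zero_power_prefix[OF G0])
    then show "(\<Sum>i=0..p. B $ i * (G ^ i) $ p) * E $ (n - p) = (\<Sum>i=0..n. B $ i * (G ^ i) $ p) * E $ (n - p)"
      by simp
  qed
  also have "\<dots> = (\<Sum>i=0..n. \<Sum>p=0..n. B $ i * ((G ^ i) $ p * E $ (n - p)))"
    by (subst sum.swap) (simp add: sum_distrib_right mult.assoc)
  also have "\<dots> = (\<Sum>i=0..n. B $ i * (G ^ i * E) $ n)"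
    by (simp add: fps_mult_nth sum_distrib_left)
  finally show ?thesis .
qed

lemma fps_power_mult_nth_eq_0:
  fixes G E :: "'a::comm_ring_1 fps"
  assumes "G $ 0 = 0" and "E $ 0 = 0"
  shows "(G ^ n * E) $ n = 0"
  unfolding fps_mult_nth
proof (rule sum.neutral, rule ballI)
  fix p assume "p \<in> {0..n}"
  then consider "p < n" | "p = n" by fastforce
  then show "(G ^ n) $ p * E $ (n - p) = 0"
    by cases (use startsby_zero_power_prefix[OF assms(1)] assms(2) in auto)
qed

section \<open>Coefficientwise derivatives of power series\<close>

definition fps_has_field_derivative :: "('a::real_normed_field \<Rightarrow> 'a fps) \<Rightarrow> 'a fps \<Rightarrow> 'a \<Rightarrow> bool"
  where "fps_has_field_derivative F D a \<longleftrightarrow> (\<forall>n. ((\<lambda>e. F e $ n) has_field_derivative D $ n) (at a))"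

definition fps_differentiable :: "('a::real_normed_field \<Rightarrow> 'a fps) \<Rightarrow> 'a \<Rightarrow> bool"
  where "fps_differentiable F a \<longleftrightarrow> (\<forall>n. (\<lambda>e. F e $ n) field_differentiable (at a))"

lemma fps_differentiable_iff_ex_derivative:
  "fps_differentiable F a \<longleftrightarrow> (\<exists>D. fps_has_field_derivative F D a)"
proof
  assume "fps_differentiable F a"
  then obtain d where "\<And>n. ((\<lambda>e. F e $ n) has_field_derivative d n) (at a)"
    unfolding fps_differentiable_def field_differentiable_def by metis
  then show "\<exists>D. fps_has_field_derivative F D a"
    unfolding fps_has_field_derivative_def by (intro exI[of _ "Abs_fps d"]) simp
qed (auto simp: fps_differentiable_def fps_has_field_derivative_def field_differentiable_def)

lemma fps_has_field_derivative_unique: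
  "fps_has_field_derivative F D a \<Longrightarrow> fps_has_field_derivative F E a \<Longrightarrow> D = E"
  unfolding fps_has_field_derivative_def by (intro fps_ext) (blast intro: DERIV_unique)

lemma fps_has_field_derivative_const: "fps_has_field_derivative (\<lambda>e. C) 0 a"
  unfolding fps_has_field_derivative_def by simp

lemma fps_has_field_derivative_linear:
  "fps_has_field_derivative (\<lambda>e. A + fps_const e * B) B a"
  unfolding fps_has_field_derivative_def by (auto intro!: derivative_eq_intros)

lemma fps_has_field_derivative_add:
  "fps_has_field_derivative F D a \<Longrightarrow> fps_has_field_derivative G E a \<Longrightarrow>
    fps_has_field_derivative (\<lambda>e. F e + G e) (D + E) a"
  unfolding fps_has_field_derivative_def by (auto intro!: derivative_eq_intros)

lemma fps_has_field_derivative_shift: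
  "fps_has_field_derivative F D a \<Longrightarrow>
    fps_has_field_derivative (\<lambda>e. fps_shift k (F e)) (fps_shift k D) a"
  unfolding fps_has_field_derivative_def by simp

lemma fps_has_field_derivative_mult:
  "fps_has_field_derivative F D a \<Longrightarrow> fps_has_field_derivative G E a \<Longrightarrow>
    fps_has_field_derivative (\<lambda>e. F e * G e) (D * G a + F a * E) a"
  unfolding fps_has_field_derivative_def fps_mult_nth fps_add_nth
  by (auto intro!: derivative_eq_intros simp: sum.distrib[symmetric] intro!: sum.cong)

lemma fps_has_field_derivative_power:
  assumes "fps_has_field_derivative F D a"
  shows "fps_has_field_derivative (\<lambda>e. F e ^ i) (of_nat i * F a ^ (i - 1) * D) a"
proof (induction i)
  case 0
  then show ?case using fps_has_field_derivative_const[of 1] by simp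
next
  case (Suc i)
  have "D * F a ^ i + F a * (of_nat i * F a ^ (i - 1) * D) = of_nat (Suc i) * F a ^ (Suc i - 1) * D"
    by (cases i) (simp_all add: algebra_simps)
  then show ?case
    using fps_has_field_derivative_mult[OF assms Suc.IH] by simp
qed

lemma fps_has_field_derivative_nth_const:
  assumes "fps_has_field_derivative F D a" "\<And>e. F e $ k = c"
  shows "D $ k = 0"
proof (rule DERIV_unique)
  show "((\<lambda>e. F e $ k) has_field_derivative D $ k) (at a)"
    using assms(1) by (simp add: fps_has_field_derivative_def)
  show "((\<lambda>e. F e $ k) has_field_derivative 0) (at a)"
    using assms(2) by simp
qed

text \<open>Differentiability of \<open>inverse\<close> and \<open>fps_inv\<close> follows from their coefficient recursions by
  strong induction; the derivatives themselves are then read off by differentiating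
  \<open>F e * inverse (F e) = 1\<close> and \<open>F e oo fps_inv (F e) = fps_X\<close>.\<close>

lemma fps_differentiable_inverse:
  assumes F0: "\<And>e. F e $ 0 = 1" and F: "fps_differentiable F a"
  shows "fps_differentiable (\<lambda>e. inverse (F e)) a"
  unfolding fps_differentiable_def
proof
  fix n show "(\<lambda>e. inverse (F e) $ n) field_differentiable (at a)"
  proof (induction n rule: less_induct)
    case (less n)
    show ?case
    proof (cases n)
      case 0
      then show ?thesis using F0 by simp
    next
      case (Suc m)
      have rec: "(\<lambda>e. inverse (F e) $ n) = (\<lambda>e. - (\<Sum>i=1..n. F e $ i * inverse (F e) $ (n - i)))"
        using Suc F0 by (simp add: fps_inverse_def fps_right_inverse_constructor_rec
                             del: fps_right_inverse_constructor.simps)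
      have summand: "(\<lambda>e. F e $ i * inverse (F e) $ (n - i)) field_differentiable (at a)"
        if "i \<in> {1..n}" for i
        using F less.IH[of "n - i"] that
        by (intro field_differentiable_mult) (auto simp: fps_differentiable_def)
      show ?thesis
        unfolding rec by (rule field_differentiable_minus field_differentiable_sum summand)+
    qed
  qed
qed

lemma fps_differentiable_fps_inv:
  assumes F0: "\<And>e. F e $ 0 = 0" and F1: "\<And>e. F e $ 1 = 1" and F: "fps_differentiable F a"
  shows "fps_differentiable (\<lambda>e. fps_inv (F e)) a"
  unfolding fps_differentiable_def
proof
  have power: "(\<lambda>e. (F e ^ i) $ k) field_differentiable (at a)" for i k
    using F fps_has_field_derivative_power
    unfolding fps_differentiable_iff_ex_derivative fps_has_field_derivative_def field_differentiable_def
    by blast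
  fix n show "(\<lambda>e. fps_inv (F e) $ n) field_differentiable (at a)"
  proof (induction n rule: less_induct)
    case (less n)
    show ?case
    proof (cases n)
      case 0
      then show ?thesis by (simp add: fps_inv_def)
    next
      case (Suc m)
      have rec: "(\<lambda>e. fps_inv (F e) $ n) =
            (\<lambda>e. fps_X $ n - (\<Sum>i=0..m. fps_inv (F e) $ i * (F e ^ i) $ n))"
        using Suc F1 by (simp add: fps_inv_def)
      have summand: "(\<lambda>e. fps_inv (F e) $ i * (F e ^ i) $ n) field_differentiable (at a)"
        if "i \<in> {0..m}" for i
        using power less.IH[of i] that Suc by (intro field_differentiable_mult) auto
      show ?thesis
        unfolding rec
        by (rule field_differentiable_diff field_differentiable_const field_differentiable_sum summand)+
    qed
  qed
qed

lemma fps_has_field_derivative_inverse: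
  assumes F0: "\<And>e. F e $ 0 = 1" and D: "fps_has_field_derivative F D a"
  shows "fps_has_field_derivative (\<lambda>e. inverse (F e)) (- D * inverse (F a) ^ 2) a"
proof -
  have "fps_differentiable (\<lambda>e. inverse (F e)) a"
    using D by (intro fps_differentiable_inverse[OF F0]) (auto simp: fps_differentiable_iff_ex_derivative)
  then obtain D' where D': "fps_has_field_derivative (\<lambda>e. inverse (F e)) D' a"
    by (auto simp: fps_differentiable_iff_ex_derivative)
  have "(\<lambda>e. F e * inverse (F e)) = (\<lambda>e. 1)"
    using F0 by (intro ext inverse_mult_eq_1') simp
  then have "fps_has_field_derivative (\<lambda>e. 1) (D * inverse (F a) + F a * D') a"
    using fps_has_field_derivative_mult[OF D D'] by simp
  then have "D * inverse (F a) + F a * D' = 0"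
    using fps_has_field_derivative_const by (rule fps_has_field_derivative_unique)
  then have "inverse (F a) * (D * inverse (F a) + F a * D') = 0" by simp
  moreover have "inverse (F a) * F a = 1" using F0[of a] by (simp add: inverse_mult_eq_1)
  ultimately have "D' = - D * inverse (F a) ^ 2"
    by (simp add: algebra_simps power2_eq_square eq_neg_iff_add_eq_0)
  then show ?thesis using D' by simp
qed

lemma fps_has_field_derivative_compose:
  assumes G0: "\<And>e. G e $ 0 = 0"
    and F: "fps_has_field_derivative F D a" and G: "fps_has_field_derivative G E a"
  shows "fps_has_field_derivative (\<lambda>e. F e oo G e) ((D oo G a) + (fps_deriv (F a) oo G a) * E) a"
  unfolding fps_has_field_derivative_def
proof
  fix n
  have E0: "E $ 0 = 0" using fps_has_field_derivative_nth_const[OF G G0] .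
  have "((\<lambda>e. \<Sum>i=0..n. F e $ i * (G e ^ i) $ n) has_field_derivative
      (\<Sum>i=0..n. D $ i * (G a ^ i) $ n + F a $ i * (of_nat i * G a ^ (i - 1) * E) $ n)) (at a)"
    using F fps_has_field_derivative_power[OF G] unfolding fps_has_field_derivative_def
    by (auto intro!: derivative_eq_intros sum.cong simp: mult.commute)
  moreover have "(\<Sum>i=0..n. F a $ i * (of_nat i * G a ^ (i - 1) * E) $ n)
      = (\<Sum>i=0..n. fps_deriv (F a) $ i * (G a ^ i * E) $ n)"
  proof (cases n)
    case (Suc m)
    have "(\<Sum>i=0..n. F a $ i * (of_nat i * G a ^ (i - 1) * E) $ n)
        = (\<Sum>i=0..m. fps_deriv (F a) $ i * (G a ^ i * E) $ n)"
      unfolding Suc sum.atLeast0_atMost_Suc_shift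
      by (simp add: fps_deriv_nth fps_of_nat mult.assoc mult.left_commute del: of_nat_Suc)
    also have "\<dots> = (\<Sum>i=0..n. fps_deriv (F a) $ i * (G a ^ i * E) $ n)"
      unfolding Suc sum.atLeast0_atMost_Suc
      using fps_power_mult_nth_eq_0[OF G0[of a] E0, of "Suc m"] by simp
    finally show ?thesis .
  qed (simp add: E0)
  ultimately show "((\<lambda>e. (F e oo G e) $ n) has_field_derivative
      ((D oo G a) + (fps_deriv (F a) oo G a) * E) $ n) (at a)"
    by (simp add: fps_compose_nth fps_compose_mult_nth[OF G0] sum.distrib)
qed

lemma fps_has_field_derivative_fps_inv:
  assumes F0: "\<And>e. F e $ 0 = 0" and F1: "\<And>e. F e $ 1 = 1"
    and D: "fps_has_field_derivative F D a"
  shows "fps_has_field_derivative (\<lambda>e. fps_inv (F e))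
           (- (D oo fps_inv (F a)) * fps_deriv (fps_inv (F a))) a"
proof -
  define h where "h = fps_inv (F a)"
  have "fps_differentiable (\<lambda>e. fps_inv (F e)) a"
    using D by (intro fps_differentiable_fps_inv[OF F0 F1]) (auto simp: fps_differentiable_iff_ex_derivative)
  then obtain D' where D': "fps_has_field_derivative (\<lambda>e. fps_inv (F e)) D' a"
    by (auto simp: fps_differentiable_iff_ex_derivative)
  have "fps_has_field_derivative (\<lambda>e. F e oo fps_inv (F e)) ((D oo h) + (fps_deriv (F a) oo h) * D') a"
    unfolding h_def by (rule fps_has_field_derivative_compose[OF _ D D']) (simp add: fps_inv_def)
  moreover have "(\<lambda>e. F e oo fps_inv (F e)) = (\<lambda>e. fps_X)"
    using F0 F1 by (simp add: fps_inv_right)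
  ultimately have implicit: "(D oo h) + (fps_deriv (F a) oo h) * D' = 0"
    using fps_has_field_derivative_const by (metis fps_has_field_derivative_unique)
  have inv: "fps_deriv h * (fps_deriv (F a) oo h) = 1"
  proof -
    have "(fps_deriv (F a) oo h) $ 0 \<noteq> 0"
      using F1[of a] by (simp add: fps_compose_nth)
    then show ?thesis
      using fps_inv_deriv[of "F a"] F0[of a] F1[of a] by (simp add: h_def inverse_mult_eq_1)
  qed
  have "D' = fps_deriv h * ((fps_deriv (F a) oo h) * D')"
    using inv by (simp flip: mult.assoc)
  also have "(fps_deriv (F a) oo h) * D' = - (D oo h)"
    using implicit by (simp add: eq_neg_iff_add_eq_0 add.commute)
  finally have "D' = - (D oo h) * fps_deriv h"
    by (simp add: mult.commute)
  then show ?thesis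
    using D' unfolding h_def by simp
qed

text \<open>In Laurent terms \<open>1/H = R + 1/h\<close>, hence \<open>DH / H\<^sup>2 = Dh / h\<^sup>2\<close>.\<close>

lemma fps_has_field_derivative_reciprocal_sum:
  fixes h :: "'a::real_normed_field \<Rightarrow> 'a fps" and R :: "'a fps"
  assumes Dh: "fps_has_field_derivative h Dh a"
    and h0: "\<And>e. h e $ 0 = 0" and h1: "\<And>e. h e $ 1 = 1"
  defines "H \<equiv> \<lambda>e. fps_X * inverse (fps_X * R + inverse (fps_shift 1 (h e)))"
  obtains DH where "fps_has_field_derivative H DH a" and "DH * h a ^ 2 = Dh * H a ^ 2"
proof -
  define K where "K e = fps_X * R + inverse (fps_shift 1 (h e))" for e
  define s where "s = fps_shift 1 (h a)"
  define d where "d = fps_shift 1 Dh"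
  have s0: "fps_shift 1 (h e) $ 0 = 1" for e using h1[of e] by simp
  have "fps_has_field_derivative K (- d * inverse s ^ 2) a"
    unfolding K_def s_def d_def using fps_has_field_derivative_add[OF fps_has_field_derivative_const
        fps_has_field_derivative_inverse[OF s0 fps_has_field_derivative_shift[OF Dh]]]
    by simp
  moreover have K0: "K e $ 0 = 1" for e using s0[of e] by (simp add: K_def)
  ultimately have "fps_has_field_derivative H (fps_X * (- (- d * inverse s ^ 2) * inverse (K a) ^ 2)) a"
    unfolding H_def K_def[symmetric]
    using fps_has_field_derivative_mult[OF fps_has_field_derivative_const fps_has_field_derivative_inverse]
    by fastforce
  moreover have "(fps_X * (- (- d * inverse s ^ 2) * inverse (K a) ^ 2)) * h a ^ 2 = Dh * H a ^ 2"
  proof -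
    have "Dh = fps_X * d"
      using fps_X_power_mult_shift[of 1 Dh] fps_has_field_derivative_nth_const[OF Dh h0]
      by (simp add: d_def)
    moreover have "h a = fps_X * s"
      using fps_X_power_mult_shift[of 1 "h a"] h0[of a] by (simp add: s_def)
    moreover have "H a = fps_X * inverse (K a)"
      by (simp add: H_def K_def)
    moreover have "inverse s ^ 2 * s ^ 2 = 1"
      using s0[of a] by (simp add: s_def inverse_mult_eq_1 flip: power_mult_distrib)
    ultimately show ?thesis
      by (simp add: power2_eq_square algebra_simps)
  qed
  ultimately show thesis using that by blast
qed

section \<open>The R-transform and free convolution\<close>

lemma gfps_nth: "gfps nu $ n = (if n = 0 then 0 else nu (n - 1))"
  by (simp add: gfps_def)

lemma fps_shift_fps_inv_gfps_nth_0: "nu 0 = 1 \<Longrightarrow> fps_shift 1 (fps_inv (gfps nu)) $ 0 = 1"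
  using fps_inv_nth_1[of "gfps nu"] by (simp add: gfps_nth)

text \<open>In the variable \<open>w = 1/z\<close> the series \<open>fps_inv (gfps nu)\<close> is \<open>1/K\<^sub>\<nu>\<close>, so this is the
  relation \<open>K\<^sub>\<nu>(z) = 1/z + R\<^sub>\<nu>(z)\<close>.\<close>

lemma inverse_shift_fps_inv_gfps:
  assumes nu0: "nu 0 = 1"
  shows "inverse (fps_shift 1 (fps_inv (gfps nu))) = 1 + fps_X * Rtr nu"
proof -
  define A where "A = Abs_fps nu"
  define h where "h = fps_inv (gfps nu)"
  define h1 where "h1 = fps_shift 1 h"
  have A0: "A $ 0 = 1" using nu0 by (simp add: A_def)
  have h0: "h $ 0 = 0" by (simp add: h_def)
  have hX: "h = fps_X * h1"
    unfolding h1_def h_def by (rule fps_X_mult_shift_fps_inv[symmetric])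
  have "fps_X * 1 = gfps nu oo h"
    using nu0 by (simp add: h_def fps_inv_right gfps_nth)
  also have "\<dots> = h * (A oo h)"
    by (simp add: gfps_def A_def fps_compose_mult_distrib[OF h0] h0)
  also have "\<dots> = fps_X * (h1 * (A oo h))"
    by (metis hX mult.assoc)
  finally have "h1 * (A oo h) = 1"
    by (metis mult_left_cancel fps_X_neq_zero)
  then have inv_Ah: "inverse (A oo h) = h1"
    using A0 by (intro fps_inverse_unique) (simp add: mult.commute)
  define r where "r = fps_shift 1 (1 - inverse A)"
  have Xr: "fps_X * r = 1 - inverse A"
    unfolding r_def using fps_X_power_mult_shift[of 1 "1 - inverse A"] A0 by simp
  have "Rtr nu = r oo h"
    by (simp add: Rtr_def r_def A_def h_def)
  then have "h * Rtr nu = (fps_X * r) oo h"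
    by (simp add: fps_compose_mult_distrib[OF h0] h0)
  also have "\<dots> = 1 - inverse (A oo h)"
    by (simp add: Xr fps_compose_sub_distrib fps_inverse_compose[OF h0] A0)
  finally have "h * Rtr nu = 1 - inverse (A oo h)" .
  then have "fps_X * (h1 * Rtr nu) = 1 - h1"
    by (metis inv_Ah hX mult.assoc)
  then have "h1 * (1 + fps_X * Rtr nu) = 1"
    by (simp add: algebra_simps)
  then show ?thesis
    using fps_inverse_unique unfolding h1_def h_def by blast
qed

lemma Rtr_inj:
  assumes nu0: "nu 0 = 1" and mu0: "mu 0 = 1" and eq: "Rtr nu = Rtr mu"
  shows "nu = mu"
proof -
  have "inverse (fps_shift 1 (fps_inv (gfps nu))) = inverse (fps_shift 1 (fps_inv (gfps mu)))"
    using inverse_shift_fps_inv_gfps[of nu, OF nu0] inverse_shift_fps_inv_gfps[of mu, OF mu0] eq by simp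
  then have "fps_shift 1 (fps_inv (gfps nu)) = fps_shift 1 (fps_inv (gfps mu))"
    using fps_shift_fps_inv_gfps_nth_0[of nu, OF nu0] fps_shift_fps_inv_gfps_nth_0[of mu, OF mu0]
    by (metis fps_inverse_idempotent zero_neq_one)
  then have "fps_inv (gfps nu) = fps_inv (gfps mu)"
    by (metis fps_X_mult_shift_fps_inv)
  then have "fps_inv (fps_inv (gfps nu)) = fps_inv (fps_inv (gfps mu))"
    by simp
  then have "gfps nu = gfps mu"
    using nu0 mu0 by (simp add: fps_inv_idempotent gfps_nth)
  show ?thesis
  proof
    fix n
    have "gfps nu $ Suc n = gfps mu $ Suc n"
      using \<open>gfps nu = gfps mu\<close> by simp
    then show "nu n = mu n"
      by (simp add: gfps_nth)
  qed
qed

definition functional_of_Rtr :: "complex fps \<Rightarrow> functional" where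
  "functional_of_Rtr R n = fps_inv (fps_X * inverse (1 + fps_X * R)) $ Suc n"

lemma functional_of_Rtr_0: "functional_of_Rtr R 0 = 1"
  using fps_inv_nth_1[of "fps_X * inverse (1 + fps_X * R)"] by (simp add: functional_of_Rtr_def)

lemma gfps_functional_of_Rtr:
  "gfps (functional_of_Rtr R) = fps_inv (fps_X * inverse (1 + fps_X * R))"
  by (intro fps_ext) (simp add: gfps_nth functional_of_Rtr_def fps_inv_def)

lemma Rtr_functional_of_Rtr: "Rtr (functional_of_Rtr R) = R"
proof -
  define H where "H = fps_X * inverse (1 + fps_X * R)"
  have "fps_inv (gfps (functional_of_Rtr R)) = H"
    unfolding gfps_functional_of_Rtr H_def[symmetric] by (simp add: H_def fps_inv_idempotent)
  moreover have "fps_shift 1 H = inverse (1 + fps_X * R)"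
    unfolding H_def by (metis fps_shift_times_fps_X' mult.commute)
  ultimately have "1 + fps_X * R = 1 + fps_X * Rtr (functional_of_Rtr R)"
    using inverse_shift_fps_inv_gfps[of "functional_of_Rtr R", OF functional_of_Rtr_0] by simp
  then show ?thesis by simp
qed

lemma fconv_eq_functional_of_Rtr:
  assumes "tau 0 = 1" "nu 0 = 1"
  shows "fconv tau nu = functional_of_Rtr (Rtr tau + Rtr nu)"
  unfolding fconv_def
proof (rule the_equality)
  fix lam assume "lam 0 = 1 \<and> Rtr lam = Rtr tau + Rtr nu"
  then show "lam = functional_of_Rtr (Rtr tau + Rtr nu)"
    by (intro Rtr_inj) (simp_all add: functional_of_Rtr_0 Rtr_functional_of_Rtr)
qed (simp add: functional_of_Rtr_0 Rtr_functional_of_Rtr)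

lemma fconv_eqI:
  assumes "tau 0 = 1" "nu 0 = 1" "lam 0 = 1" "Rtr lam = Rtr tau + Rtr nu"
  shows "fconv tau nu = lam"
  using assms by (simp add: fconv_eq_functional_of_Rtr Rtr_inj functional_of_Rtr_0 Rtr_functional_of_Rtr)

lemma gfps_fconv:
  assumes "sig 0 = 1" "tau 0 = 1"
  shows "gfps (fconv sig tau) =
    fps_inv (fps_X * inverse (fps_X * Rtr sig + inverse (fps_shift 1 (fps_inv (gfps tau)))))"
proof -
  have "1 + fps_X * (Rtr sig + Rtr tau) =
      fps_X * Rtr sig + inverse (fps_shift 1 (fps_inv (gfps tau)))"
    using inverse_shift_fps_inv_gfps[of tau, OF assms(2)] by (simp add: algebra_simps)
  then show ?thesis
    using assms by (simp add: fconv_eq_functional_of_Rtr gfps_functional_of_Rtr)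
qed

lemma fconv_semigroup:
  assumes unital: "\<And>t. 0 \<le> t \<Longrightarrow> m t 0 = 1"
    and Rtr_linear: "\<And>t. 0 \<le> t \<Longrightarrow> Rtr (m t) = fps_const (complex_of_real t) * R"
    and "0 \<le> s" "0 \<le> t"
  shows "fconv (m t) (m s) = m (t + s)"
  using assms by (intro fconv_eqI) (simp_all add: distrib_right flip: fps_const_add)

section \<open>Directional derivative of the free convolution\<close>

text \<open>Here \<open>h\<close> and \<open>H\<close> are the compositional inverses of the Cauchy transforms before and after
  convolving (so \<open>1/H = 1/h + R\<close>), and \<open>Dh\<close>, \<open>DH\<close>, \<open>DG\<close> are the derivatives of \<open>h\<close>, \<open>H\<close> and
  \<open>G = fps_inv H\<close> along a perturbation \<open>gV\<close> of the first Cauchy transform.\<close>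

lemma subordination_derivative_eq:
  fixes h H G gV Dh DH DG :: "'a::idom fps"
  assumes h0: "h $ 0 = 0" and G0: "G $ 0 = 0" and F1: "(h oo G) $ 1 \<noteq> 0"
    and gV: "gV $ 0 = 0" "gV $ 1 = 0"
    and HG: "H oo G = fps_X"
    and Dh: "Dh = - (gV oo h) * fps_deriv h"
    and DH: "DH * h ^ 2 = Dh * H ^ 2"
    and DG: "DG = - (DH oo G) * fps_deriv G"
  shows "DG = fps_X ^ 2 * ((fps_shift 2 gV oo (h oo G)) * fps_deriv (h oo G))"
proof -
  define F where "F = h oo G"
  have F0: "F $ 0 = 0" by (simp add: F_def h0)
  have DHG: "(DH oo G) * F ^ 2 = (Dh oo G) * fps_X ^ 2"
    using arg_cong[OF DH, of "\<lambda>x. x oo G"]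
    by (simp add: F_def HG fps_compose_mult_distrib[OF G0] fps_compose_power[OF G0, symmetric])
  have DhG: "Dh oo G = - (gV oo F) * (fps_deriv h oo G)"
    by (simp add: Dh F_def fps_compose_mult_distrib[OF G0] fps_compose_uminus fps_compose_assoc[OF G0 h0])
  have gVF: "gV oo F = F ^ 2 * (fps_shift 2 gV oo F)"
    using gV F0 by (intro fps_X_power_mult_shift_compose) (auto simp: less_2_cases_iff)
  have F': "fps_deriv F = (fps_deriv h oo G) * fps_deriv G"
    by (simp add: F_def fps_compose_deriv[OF G0])
  have "F ^ 2 * DG = - ((DH oo G) * F ^ 2) * fps_deriv G"
    by (simp add: DG algebra_simps)
  also have "\<dots> = (gV oo F) * ((fps_deriv h oo G) * fps_deriv G) * fps_X ^ 2"
    by (simp add: DHG DhG algebra_simps)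
  also have "\<dots> = F ^ 2 * (fps_X ^ 2 * ((fps_shift 2 gV oo F) * fps_deriv F))"
    by (simp add: gVF F' algebra_simps)
  finally have "F ^ 2 * DG = F ^ 2 * (fps_X ^ 2 * ((fps_shift 2 gV oo F) * fps_deriv F))" .
  moreover have "F \<noteq> 0"
    using F1 by (auto simp: F_def)
  ultimately show ?thesis
    by (simp add: F_def)
qed

text \<open>In the variable \<open>w = 1/z\<close>, \<open>recip_F ms mt\<close> is \<open>1/F_{s,t}(z)\<close>.\<close>

definition recip_F :: "functional \<Rightarrow> functional \<Rightarrow> complex fps" where
  "recip_F ms mt = fps_inv (gfps ms) oo gfps mt"

definition transport_functional :: "functional \<Rightarrow> functional \<Rightarrow> functional \<Rightarrow> functional" where
  "transport_functional ms mt V j =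
     (fps_X ^ 2 * ((fps_shift 2 (gfps V) oo recip_F ms mt) * fps_deriv (recip_F ms mt))) $ Suc j"

lemma gfps_add_scaled: "gfps (\<lambda>i. tau i + e * V i) = gfps tau + fps_const e * gfps V"
  by (intro fps_ext) (simp add: gfps_nth)

lemma fps_has_field_derivative_gfps_fconv:
  assumes sig0: "sig 0 = 1" and tau0: "tau 0 = 1" and V0: "V 0 = 0"
  defines "F \<equiv> recip_F tau (fconv sig tau)"
  shows "fps_has_field_derivative (\<lambda>e. gfps (fconv sig (\<lambda>i. tau i + e * V i)))
           (fps_X ^ 2 * ((fps_shift 2 (gfps V) oo F) * fps_deriv F)) 0"
proof -
  define h where "h e = fps_inv (gfps tau + fps_const e * gfps V)" for e
  define H where "H e = fps_X * inverse (fps_X * Rtr sig + inverse (fps_shift 1 (h e)))" for e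
  define Dh where "Dh = - (gfps V oo h 0) * fps_deriv (h 0)"
  have G: "gfps (fconv sig (\<lambda>i. tau i + e * V i)) = fps_inv (H e)" for e
    using gfps_fconv[of sig "\<lambda>i. tau i + e * V i"] sig0 tau0 V0
    by (simp add: gfps_add_scaled H_def h_def)
  have "fps_has_field_derivative h Dh 0"
    unfolding h_def Dh_def
    by (rule fps_has_field_derivative_fps_inv[OF _ _ fps_has_field_derivative_linear])
      (use tau0 V0 in \<open>simp_all add: gfps_nth\<close>)
  moreover have h0: "h e $ 0 = 0" and h1: "h e $ 1 = 1" for e
    using tau0 V0 fps_inv_nth_1[of "gfps tau + fps_const e * gfps V"] by (simp_all add: h_def gfps_nth)
  ultimately obtain DH where DH: "fps_has_field_derivative H DH 0" and DH_eq: "DH * h 0 ^ 2 = Dh * H 0 ^ 2"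
    using fps_has_field_derivative_reciprocal_sum[of h Dh 0 "Rtr sig"] unfolding H_def by blast
  have H0: "H e $ 0 = 0" and H1: "H e $ 1 = 1" for e
    using h1[of e] by (simp_all add: H_def)
  have "- (DH oo fps_inv (H 0)) * fps_deriv (fps_inv (H 0)) =
      fps_X ^ 2 * ((fps_shift 2 (gfps V) oo (h 0 oo fps_inv (H 0))) * fps_deriv (h 0 oo fps_inv (H 0)))"
  proof (rule subordination_derivative_eq[where DH = DH and Dh = Dh, OF h0 fps_inv_nth_0])
    show "(h 0 oo fps_inv (H 0)) $ 1 \<noteq> 0"
      using h0[of 0] h1[of 0] H1[of 0] fps_inv_nth_1[of "H 0"]
      by (simp add: fps_compose_nth numeral_2_eq_2)
    show "H 0 oo fps_inv (H 0) = fps_X"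
      using H0 H1 by (simp add: fps_inv_right)
  qed (use V0 DH_eq in \<open>simp_all add: Dh_def gfps_nth\<close>)
  moreover have "h 0 oo fps_inv (H 0) = F"
    using G[of 0] by (simp add: F_def recip_F_def h_def)
  ultimately show ?thesis
    using fps_has_field_derivative_fps_inv[OF H0 H1 DH] G by simp
qed

lemma has_field_derivative_fconv:
  assumes "sig 0 = 1" and "tau 0 = 1" and "V 0 = 0"
  shows "((\<lambda>e. fconv sig (\<lambda>i. tau i + e * V i) k) has_field_derivative
           transport_functional tau (fconv sig tau) V k) (at 0)"
proof -
  have "((\<lambda>e. gfps (fconv sig (\<lambda>i. tau i + e * V i)) $ Suc k) has_field_derivative
      transport_functional tau (fconv sig tau) V k) (at 0)"
    using fps_has_field_derivative_gfps_fconv[of sig tau V, OF assms]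
    unfolding fps_has_field_derivative_def transport_functional_def by blast
  then show ?thesis
    by (simp add: gfps_nth)
qed

lemma transport_functional_self:
  assumes tau0: "tau 0 = 1" and V0: "V 0 = 0"
  shows "transport_functional tau tau V = V"
proof
  fix j
  have "recip_F tau tau = fps_X"
    using tau0 by (simp add: recip_F_def fps_inv gfps_nth)
  moreover have "fps_X ^ 2 * fps_shift 2 (gfps V) = gfps V"
    using V0 by (intro fps_X_power_mult_shift) (auto simp: gfps_nth less_2_cases_iff)
  ultimately show "transport_functional tau tau V j = V j"
    by (simp add: transport_functional_def gfps_nth)
qed

section \<open>Coefficients of the operators K\<close>

lemma recip_F_mult_wF:
  assumes ms0: "ms 0 = 1" and mt0: "mt 0 = 1"
  shows "recip_F ms mt * wF ms mt = fps_X"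
proof -
  define g where "g = gfps mt"
  define A where "A = Abs_fps mt"
  define h1 where "h1 = fps_shift 1 (fps_inv (gfps ms))"
  have g0: "g $ 0 = 0" by (simp add: g_def gfps_nth)
  have gX: "g = fps_X * A" by (simp add: g_def A_def gfps_def)
  have A0: "A $ 0 = 1" using mt0 by (simp add: A_def)
  have h10: "h1 $ 0 = 1" using fps_shift_fps_inv_gfps_nth_0[of ms, OF ms0] by (simp add: h1_def)
  have "inverse (h1 oo g) = 1 + g * (Rtr ms oo g)"
    using inverse_shift_fps_inv_gfps[of ms, OF ms0] fps_inverse_compose[OF g0, of h1] h10
    by (simp add: h1_def fps_compose_add_distrib fps_compose_mult_distrib[OF g0] g0)
  then have h1g: "(h1 oo g) * (1 + g * (Rtr ms oo g)) = 1"
    using h10 by (metis fps_compose_nth_0 inverse_mult_eq_1' zero_neq_one)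
  have Aw: "A * wF ms mt = 1 + g * (Rtr ms oo g)"
    using A0 by (simp add: wF_def A_def[symmetric] g_def[symmetric] distrib_left gX
        inverse_mult_eq_1' mult.assoc)
  have "recip_F ms mt = g * (h1 oo g)"
    unfolding recip_F_def g_def[symmetric] h1_def
    by (subst fps_X_mult_shift_fps_inv[symmetric]) (simp add: fps_compose_mult_distrib[OF g0] g0)
  then have "recip_F ms mt * wF ms mt = fps_X * ((h1 oo g) * (A * wF ms mt))"
    by (simp add: gX mult_ac)
  then show ?thesis
    using Aw h1g by simp
qed

definition poly_coeff_fps :: "nat \<Rightarrow> 'a::zero poly fps \<Rightarrow> 'a fps" where
  "poly_coeff_fps m Y = Abs_fps (\<lambda>n. coeff (Y $ n) m)"

lemma poly_coeff_fps_inject: "(\<And>m. poly_coeff_fps m Y = poly_coeff_fps m Z) \<Longrightarrow> Y = Z"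
  unfolding poly_coeff_fps_def by (metis fps_ext fps_nth_Abs_fps poly_eqI)

lemma poly_coeff_fps_const_mult:
  "poly_coeff_fps m (Abs_fps (\<lambda>n. [:a $ n:]) * Y) = a * poly_coeff_fps m Y"
  unfolding poly_coeff_fps_def by (intro fps_ext) (simp add: fps_mult_nth coeff_sum)

lemma poly_coeff_fps_X_mult:
  "poly_coeff_fps m (fps_X * fps_const [:0, 1:] * Y) =
    (if m = 0 then 0 else fps_X * poly_coeff_fps (m - 1) Y)"
  unfolding poly_coeff_fps_def
  by (intro fps_ext) (auto simp: mult.assoc mult_pCons_left coeff_pCons split: nat.split)

lemma poly_coeff_fps_one: "poly_coeff_fps m 1 = (if m = 0 then 1 else 0)"
  unfolding poly_coeff_fps_def by (intro fps_ext) (auto simp: fps_one_nth)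

lemma poly_coeff_fps_diff: "poly_coeff_fps m (Y - Z) = poly_coeff_fps m Y - poly_coeff_fps m Z"
  unfolding poly_coeff_fps_def by (intro fps_ext) simp

text \<open>The expansion \<open>1/(w - X x) = \<Sum>m. x^m X^m / w^(m+1)\<close> in powers of the polynomial
  variable \<open>x\<close>.\<close>

lemma coeff_inverse_lift_minus_X_poly:
  fixes w :: "'a::field fps"
  assumes w0: "w $ 0 = 1"
  shows "coeff (fps_right_inverse (Abs_fps (\<lambda>n. [:w $ n:]) - fps_X * fps_const [:0, 1:]) 1 $ i) m
           = (fps_X ^ m * inverse w ^ Suc m) $ i"
proof -
  define f where "f = Abs_fps (\<lambda>n. [:w $ n:]) - fps_X * fps_const [:0, 1:]"
  define C where "C = Abs_fps (\<lambda>i. \<Sum>j\<le>i. monom ((fps_X ^ j * inverse w ^ Suc j) $ i) j)"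
  have C: "poly_coeff_fps m C = fps_X ^ m * inverse w ^ Suc m" for m
    unfolding poly_coeff_fps_def C_def
    by (intro fps_ext) (auto simp: coeff_sum fps_X_power_mult_nth)
  have w: "w * inverse w = 1"
    using w0 by (simp add: inverse_mult_eq_1')
  have fC: "f * C = 1"
  proof (rule poly_coeff_fps_inject)
    fix m show "poly_coeff_fps m (f * C) = poly_coeff_fps m 1"
    proof (cases m)
      case (Suc j)
      have "w * (fps_X ^ Suc j * inverse w ^ Suc (Suc j)) = fps_X * (fps_X ^ j * inverse w ^ Suc j)"
        using w by (simp add: algebra_simps)
      then show ?thesis using Suc
        by (simp add: f_def left_diff_distrib poly_coeff_fps_diff poly_coeff_fps_const_mult
            poly_coeff_fps_X_mult poly_coeff_fps_one C)
    qed (simp add: w f_def left_diff_distrib poly_coeff_fps_diff poly_coeff_fps_const_mult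
          poly_coeff_fps_X_mult poly_coeff_fps_one C)
  qed
  have "f * fps_right_inverse f 1 = 1"
    unfolding f_def by (rule fps_right_inverse) (simp add: w0 one_pCons)
  then have "fps_right_inverse f 1 = (C * f) * fps_right_inverse f 1"
    using fC by (simp add: mult.commute)
  also have "\<dots> = C"
    using \<open>f * fps_right_inverse f 1 = 1\<close> by (simp add: mult.assoc)
  finally have "fps_right_inverse f 1 = C" .
  then show ?thesis
    using C[of m] unfolding f_def poly_coeff_fps_def by (metis fps_nth_Abs_fps)
qed

lemma coeff_resF:
  assumes ms0: "ms 0 = 1" and mt0: "mt 0 = 1"
  shows "coeff (resF ms mt $ i) m = (recip_F ms mt ^ Suc m) $ Suc i"
proof -
  define F where "F = recip_F ms mt"
  define F1 where "F1 = fps_shift 1 F"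
  have FX: "F = fps_X * F1"
    using fps_X_power_mult_shift[of 1 F] by (simp add: F1_def F_def recip_F_def)
  have "wF ms mt * F1 = 1"
    using recip_F_mult_wF[of ms mt, OF ms0 mt0] by (simp add: F_def[symmetric] FX mult_ac)
  then have "inverse (wF ms mt) = F1"
    by (rule fps_inverse_unique)
  moreover have "wF ms mt $ 0 = 1"
    by (simp add: wF_def mt0)
  ultimately have "coeff (resF ms mt $ i) m = (fps_X ^ m * F1 ^ Suc m) $ i"
    unfolding resF_def using coeff_inverse_lift_minus_X_poly[of "wF ms mt" i m] by simp
  also have "\<dots> = (fps_X * (fps_X ^ m * F1 ^ Suc m)) $ Suc i"
    by simp
  also have "fps_X * (fps_X ^ m * F1 ^ Suc m) = F ^ Suc m"
    unfolding FX power_mult_distrib by (simp only: power_Suc mult_ac)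
  finally show ?thesis by (simp add: F_def)
qed

lemma pair_eq_sum: "degree p \<le> N \<Longrightarrow> pair nu p = (\<Sum>i\<le>N. coeff p i * nu i)"
  unfolding pair_def by (rule sum.mono_neutral_left) (auto simp: coeff_eq_0)

lemma pair_cong: "(\<And>i. i \<le> degree p \<Longrightarrow> nu i = nu' i) \<Longrightarrow> pair nu p = pair nu' p"
  unfolding pair_def by simp

lemma pair_one: "pair nu 1 = nu 0"
  by (simp add: pair_def)

lemma pair_add: "pair nu (p + q) = pair nu p + pair nu q"
  using pair_eq_sum[of p "max (degree p) (degree q)" nu] pair_eq_sum[of q "max (degree p) (degree q)" nu]
    pair_eq_sum[of "p + q" "max (degree p) (degree q)" nu] degree_add_le[of p _ q]
  by (simp add: sum.distrib distrib_right)

lemma pair_smult: "pair nu (smult a p) = a * pair nu p"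
  using pair_eq_sum[of "smult a p" "degree p" nu] by (simp add: pair_def sum_distrib_left mult.assoc)

lemma pair_sum: "pair nu (\<Sum>k\<in>A. f k) = (\<Sum>k\<in>A. pair nu (f k))"
  by (induction A rule: infinite_finite_induct) (simp_all add: pair_def[of _ 0] pair_add)

lemma pair_monom: "pair nu (monom 1 i) = nu i"
  using pair_eq_sum[of "monom 1 i" i nu] by (simp add: degree_monom_le mult_delta_left sum.delta)

lemma pair_sum_functional:
  "pair (\<lambda>j. \<Sum>m\<in>A. c m * nu m j) p = (\<Sum>m\<in>A. c m * pair (nu m) p)"
  unfolding pair_def by (simp add: sum_distrib_left mult_ac sum.swap[of _ A])

lemma coeff_Kop_pderiv:
  assumes "tau 0 = 1" "lam 0 = 1"
  shows "coeff (Kop tau lam (pderiv Q)) m =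
           pair (\<lambda>j. of_nat j * (recip_F tau lam ^ Suc m) $ j) Q"
proof -
  define a where "a j = (recip_F tau lam ^ Suc m) $ j" for j
  have "coeff (Kop tau lam (pderiv Q)) m = (\<Sum>i\<le>degree (pderiv Q). coeff (pderiv Q) i * a (Suc i))"
    using assms by (simp add: Kop_def coeff_sum coeff_resF a_def)
  also have "\<dots> = pair (\<lambda>j. of_nat j * a j) Q"
  proof (cases "degree Q")
    case 0
    then have "pderiv Q = 0" by (simp add: pderiv_eq_0_iff)
    with 0 show ?thesis by (simp add: pair_def)
  next
    case (Suc d)
    then have "degree (pderiv Q) = d"
      by (simp add: degree_pderiv)
    then show ?thesis
      unfolding pair_def Suc sum.atMost_Suc_shift by (simp add: coeff_pderiv mult_ac del: of_nat_Suc)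
  qed
  finally show ?thesis by (simp add: a_def)
qed

text \<open>\<open>P\<close> is an antiderivative of \<open>fps_shift 2 (gfps V)\<close>; its constant term is the junk value
  \<open>V 0 / 0 = 0\<close>.\<close>

lemma transport_functional_eq_compose:
  fixes V :: functional
  defines "P \<equiv> Abs_fps (\<lambda>m. V m / of_nat m)"
  shows "transport_functional ms mt V j = of_nat j * (P oo recip_F ms mt) $ j"
proof -
  define F where "F = recip_F ms mt"
  have F0: "F $ 0 = 0" by (simp add: F_def recip_F_def gfps_nth)
  have "fps_deriv P = fps_shift 2 (gfps V)"
    by (intro fps_ext) (simp add: P_def gfps_nth fps_deriv_nth del: of_nat_Suc)
  then have "transport_functional ms mt V j = (fps_X ^ 2 * fps_deriv (P oo F)) $ Suc j"
    by (simp add: transport_functional_def F_def[symmetric] fps_compose_deriv[OF F0])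
  also have "\<dots> = of_nat j * (P oo F) $ j"
    by (cases j) (simp_all add: fps_X_power_mult_nth fps_deriv_nth P_def F0)
  finally show ?thesis by (simp add: F_def)
qed

lemma pair_transport_functional:
  assumes tau0: "tau 0 = 1" and lam0: "lam 0 = 1" and V0: "V 0 = 0"
    and mart: "pderiv L = Kop tau lam (pderiv Q)"
  shows "pair (transport_functional tau lam V) Q = pair V L"
proof -
  define F where "F = recip_F tau lam"
  define P where "P = Abs_fps (\<lambda>m. V m / of_nat m)"
  define N where "N = degree Q + degree L"
  have F0: "F $ 0 = 0" by (simp add: F_def recip_F_def gfps_nth)
  have "pair (transport_functional tau lam V) Q =
      pair (\<lambda>j. \<Sum>m\<le>N. P $ m * (of_nat j * (F ^ m) $ j)) Q"
  proof (rule pair_cong)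
    fix j assume "j \<le> degree Q"
    then have "(P oo F) $ j = (\<Sum>m\<le>N. P $ m * (F ^ m) $ j)"
      unfolding fps_compose_nth atLeast0AtMost
      by (intro sum.mono_neutral_left) (auto simp: N_def startsby_zero_power_prefix[OF F0])
    then show "transport_functional tau lam V j = (\<Sum>m\<le>N. P $ m * (of_nat j * (F ^ m) $ j))"
      by (simp add: transport_functional_eq_compose P_def[symmetric] F_def[symmetric]
          sum_distrib_left mult_ac)
  qed
  also have "\<dots> = (\<Sum>m\<le>N. P $ m * pair (\<lambda>j. of_nat j * (F ^ m) $ j) Q)"
    by (rule pair_sum_functional)
  also have "\<dots> = (\<Sum>m\<le>N. coeff L m * V m)"
  proof (rule sum.cong[OF refl])
    fix m
    show "P $ m * pair (\<lambda>j. of_nat j * (F ^ m) $ j) Q = coeff L m * V m"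
    proof (cases m)
      case (Suc k)
      have "pair (\<lambda>j. of_nat j * (F ^ m) $ j) Q = of_nat m * coeff L m"
        using coeff_Kop_pderiv[of tau lam, OF tau0 lam0, of Q k] Suc
        by (simp add: F_def coeff_pderiv flip: mart)
      then show ?thesis
        using Suc by (simp add: P_def del: of_nat_Suc)
    qed (simp add: V0 P_def)
  qed
  also have "\<dots> = pair V L"
    by (rule pair_eq_sum[symmetric]) (simp add: N_def)
  finally show ?thesis .
qed

section \<open>Bases of polynomials and dual functionals\<close>

lemma functional_eqI_basis:
  assumes B: "is_basis_family B" and eq: "\<And>k. pair a (B k) = pair b (B k)"
  shows "a = b"
proof
  fix i
  obtain c N where cN: "monom 1 i = (\<Sum>k\<le>N. smult (c k) (B k))"
    using B unfolding is_basis_family_def by blast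
  have "a i = pair a (monom 1 i)" by (simp add: pair_monom)
  also have "\<dots> = pair b (monom 1 i)"
    unfolding cN by (simp add: pair_sum pair_smult eq)
  also have "\<dots> = b i" by (simp add: pair_monom)
  finally show "a i = b i" .
qed

lemma span_degree_family:
  fixes B :: "nat \<Rightarrow> 'a::field poly"
  assumes deg: "\<And>k. degree (B k) = k" and B0: "B 0 \<noteq> 0"
  shows "degree q \<le> n \<Longrightarrow> \<exists>c. q = (\<Sum>k\<le>n. smult (c k) (B k))"
proof (induction n arbitrary: q)
  case 0
  obtain a b where "q = [:a:]" and "B 0 = [:b:]"
    using 0 deg[of 0] by (metis le_zero_eq degree_eq_zeroE)
  moreover have "b \<noteq> 0"
    using B0 \<open>B 0 = [:b:]\<close> by auto
  ultimately have "q = smult (a / b) (B 0)" by simp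
  then show ?case by auto
next
  case (Suc n)
  define a where "a = coeff q (Suc n) / lead_coeff (B (Suc n))"
  have "lead_coeff (B (Suc n)) \<noteq> 0"
    using deg[of "Suc n"] by (metis degree_0 leading_coeff_0_iff nat.distinct(1))
  then have "coeff (q - smult a (B (Suc n))) (Suc n) = 0"
    using deg[of "Suc n"] by (simp add: a_def)
  moreover have "degree (q - smult a (B (Suc n))) \<le> Suc n"
    using Suc.prems deg[of "Suc n"] by (intro degree_diff_le) auto
  ultimately have "degree (q - smult a (B (Suc n))) \<le> n"
    by (metis eq_zero_or_degree_less degree_0 le_Suc_eq less_Suc_eq_le zero_le)
  then obtain c where "q - smult a (B (Suc n)) = (\<Sum>k\<le>n. smult (c k) (B k))"
    using Suc.IH by blast
  then have "q = (\<Sum>k\<le>Suc n. smult ((c(Suc n := a)) k) (B k))"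
    by (simp add: algebra_simps)
  then show ?case by blast
qed

lemma independent_degree_family:
  fixes B :: "nat \<Rightarrow> 'a::field poly"
  assumes deg: "\<And>k. degree (B k) = k" and B0: "B 0 \<noteq> 0"
  shows "(\<Sum>k\<le>N. smult (c k) (B k)) = 0 \<Longrightarrow> \<forall>k\<le>N. c k = 0"
proof (induction N)
  case 0
  then show ?case using B0 by simp
next
  case (Suc N)
  have "coeff (\<Sum>k\<le>N. smult (c k) (B k)) (Suc N) = 0"
    by (simp add: coeff_sum coeff_eq_0 deg)
  then have "c (Suc N) * lead_coeff (B (Suc N)) = 0"
    using arg_cong[OF Suc.prems, of "\<lambda>p. coeff p (Suc N)"] by (simp add: deg)
  moreover have "lead_coeff (B (Suc N)) \<noteq> 0"
    using deg[of "Suc N"] by (metis degree_0 leading_coeff_0_iff nat.distinct(1))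
  ultimately have "c (Suc N) = 0" by simp
  with Suc show ?case by (simp add: le_Suc_eq)
qed

lemma is_basis_family_degree:
  assumes "\<And>k. degree (B k) = k" and "B 0 \<noteq> 0"
  shows "is_basis_family B"
  using span_degree_family[OF assms] independent_degree_family[OF assms]
  unfolding is_basis_family_def by blast

lemma is_basis_family_fluctuation:
  assumes deg: "\<And>k. 1 \<le> k \<Longrightarrow> degree (pderiv (V k)) = k - 1"
    and unit: "\<And>k. 1 \<le> k \<Longrightarrow> pair (nu k) 1 = 0"
    and dual: "\<And>k. 1 \<le> k \<Longrightarrow> pair (nu k) (V k) = 1"
  shows "is_basis_family (\<lambda>k. if k = 0 then 1 else V k)"
proof (rule is_basis_family_degree)
  fix k show "degree (if k = 0 then 1 else V k) = k"
  proof (cases "k = 0")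
    case False
    then have k: "1 \<le> k" by simp
    show ?thesis
    proof (cases "degree (V k) = 0")
      case True
      then have "pair (nu k) (V k) = coeff (V k) 0 * pair (nu k) 1"
        by (simp add: pair_def pair_one)
      then show ?thesis using unit[OF k] dual[OF k] by simp
    qed (use False deg[OF k] in \<open>auto simp: degree_pderiv\<close>)
  qed simp
qed simp

lemma transport_functional_dual:
  assumes tau0: "tau 0 = 1" and lam0: "lam 0 = 1"
    and basis: "is_basis_family (\<lambda>k. if k = 0 then 1 else W k)"
    and mart: "\<And>k. 1 \<le> k \<Longrightarrow> pderiv (V k) = Kop tau lam (pderiv (W k))"
    and unit: "pair nu 1 = 0" "pair nu' 1 = 0"
    and dual: "\<And>k. 1 \<le> k \<Longrightarrow> pair nu (V k) = pair nu' (W k)"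
  shows "transport_functional tau lam nu = nu'"
proof (rule functional_eqI_basis[OF basis])
  fix k
  show "pair (transport_functional tau lam nu) (if k = 0 then 1 else W k) =
        pair nu' (if k = 0 then 1 else W k)"
  proof (cases "k = 0")
    case True
    then show ?thesis
      using unit by (simp add: pair_one transport_functional_def fps_X_power_mult_nth)
  next
    case False
    then have "pair (transport_functional tau lam nu) (W k) = pair nu (V k)"
      using unit(1) mart[of k] by (intro pair_transport_functional[of tau lam, OF tau0 lam0]) (simp_all add: pair_one)
    with False dual[of k] show ?thesis by simp
  qed
qed

lemma transport_functional_dual_family:
  assumes unital: "\<And>t. 0 \<le> t \<Longrightarrow> m t 0 = 1"
    and mart: "\<And>k. 1 \<le> k \<Longrightarrow> martingale_poly m (\<lambda>t. pderiv (V k t))"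
    and basis: "\<And>t. 0 \<le> t \<Longrightarrow> is_basis_family (\<lambda>k. if k = 0 then 1 else V k t)"
    and unit: "\<And>t. 0 \<le> t \<Longrightarrow> pair (nu t) 1 = 0"
    and dual: "\<And>k t. 1 \<le> k \<Longrightarrow> 0 \<le> t \<Longrightarrow> pair (nu t) (V k t) = c k"
    and s: "0 \<le> s" and t: "0 \<le> t"
  shows "transport_functional (m s) (m (t + s)) (nu s) = nu (t + s)"
proof (cases "t = 0")
  case True
  then show ?thesis
    using unital[OF s] unit[OF s] by (simp add: transport_functional_self pair_one)
next
  case False
  then show ?thesis
    using unital s t basis[of "t + s"] mart unit dual
    by (intro transport_functional_dual[where V = "\<lambda>k. V k s"]) (auto simp: martingale_poly_def)
qed

theorem corollary4p6:
  fixes mu :: "real \<Rightarrow> real measure"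
    and V :: "nat \<Rightarrow> real \<Rightarrow> complex poly"
    and Vs :: "nat \<Rightarrow> real \<Rightarrow> functional"
  assumes prob: "\<And>t. 0 \<le> t \<Longrightarrow> prob_space (mu t)"
    and borel: "\<And>t. 0 \<le> t \<Longrightarrow> sets (mu t) = sets borel"
    and moments: "\<And>t n. 0 \<le> t \<Longrightarrow> integrable (mu t) (\<lambda>x. x ^ n)"
    and semigroup: "\<And>t. 0 \<le> t \<Longrightarrow>
          Rtr (mom (mu t)) = fps_const (complex_of_real t) * Rtr (mom (mu 1))"
    and fluct_mart: "\<And>n. 1 \<le> n \<Longrightarrow>
          martingale_poly (\<lambda>t. mom (mu t)) (\<lambda>t. pderiv (V n t))"
    and fluct_deg: "\<And>n t. 1 \<le> n \<Longrightarrow> 0 \<le> t \<Longrightarrow> degree (pderiv (V n t)) = n - 1"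
    and dual_unit: "\<And>n t. 1 \<le> n \<Longrightarrow> 0 \<le> t \<Longrightarrow> pair (Vs n t) 1 = 0"
    and dual: "\<And>n k t. 1 \<le> n \<Longrightarrow> 1 \<le> k \<Longrightarrow> 0 \<le> t \<Longrightarrow>
          pair (Vs n t) (V k t) = (if n = k then 1 else 0)"
  shows "(\<forall>t\<ge>0. is_basis_family (\<lambda>k. if k = 0 then 1 else V k t)) \<and>
         (\<forall>n\<ge>1. \<forall>s\<ge>0. \<forall>t\<ge>0. \<forall>k.
            ((\<lambda>\<epsilon>::complex.
                (fconv (mom (mu t)) (\<lambda>i. mom (mu s) i + \<epsilon> * Vs n s i) k
                 - fconv (mom (mu t)) (mom (mu s)) k) / \<epsilon>)
             \<longlongrightarrow> Vs n (t + s) k) (at 0))"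
proof -
  let ?m = "\<lambda>t. mom (mu t)"
  have unital: "?m t 0 = 1" if "0 \<le> t" for t
    using prob[OF that] by (simp add: mom_def prob_space.prob_space)
  have basis: "is_basis_family (\<lambda>k. if k = 0 then 1 else V k t)" if "0 \<le> t" for t
    using that fluct_deg dual_unit dual
    by (intro is_basis_family_fluctuation[where nu = "\<lambda>k. Vs k t"]) simp_all
  show ?thesis
  proof (intro conjI allI impI)
    fix n k :: nat and s t :: real
    assume n: "1 \<le> n" and s: "0 \<le> s" and t: "0 \<le> t"
    have "transport_functional (?m s) (?m (t + s)) (Vs n s) = Vs n (t + s)"
      by (rule transport_functional_dual_family[where m = ?m and nu = "Vs n",
            OF unital fluct_mart basis dual_unit[OF n] dual[OF n] s t])
    then have "((\<lambda>e. fconv (?m t) (\<lambda>i. ?m s i + e * Vs n s i) k) has_field_derivative Vs n (t + s) k) (at 0)"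
      using has_field_derivative_fconv[of "?m t" "?m s" "Vs n s" k] unital s t dual_unit[OF n s]
        fconv_semigroup[of ?m, OF unital semigroup s t]
      by (simp add: pair_one)
    then show "((\<lambda>\<epsilon>. (fconv (?m t) (\<lambda>i. ?m s i + \<epsilon> * Vs n s i) k - fconv (?m t) (?m s) k) / \<epsilon>)
        \<longlongrightarrow> Vs n (t + s) k) (at 0)"
      by (simp add: has_field_derivative_iff)
  qed (use basis in blast)
qed

end
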